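(* Let $(\Lambda,d)$ be a finitely aligned $k$-graph. For $F,G\in S_\Lambda$ define $FG:=\bigcup_{(\lambda,\mu)\in F,(\xi,\eta)\in G}\{(\lambda\alpha,\eta\beta):(\alpha,\beta)\in\Lambda^{\min}(\mu,\xi)\}$. Then $FG\in S_\Lambda$, and this defines an associative multiplication on $S_\Lambda$.
   Context: A $k$-graph $(\Lambda,d)$ is a countable small category $\Lambda$ (objects identified with identity morphisms) with a functor $d:\Lambda\to\mathbb N^k$ satisfying unique factorization: whenever $d(\lambda)=m+n$ there are unique $\mu,\nu$ with $d(\mu)=m$, $d(\nu)=n$, $\lambda=\mu\nu$. $r,s$ are range/source. $\Lambda^{\min}(\lambda,\mu)=\{(\alpha,\beta):\lambda\alpha=\mu\beta,\ d(\lambda\alpha)=d(\lambda)\vee d(\mu)\}$ ($\vee$ = coordinatewise max); $\Lambda$ is finitely aligned if all $\Lambda^{\min}(\lambda,\mu)$ are finite. $\Lambda*_s\Lambda=\{(\lambda,\mu)\in\Lambda\times\Lambda:s(\lambda)=s(\mu)\}$. $S_\Lambda$ is the collection of all finite subsets $F\subseteq\Lambda*_s\Lambda$ such that for distinct $(\lambda,\mu),(\nu,\omega)\in F$ we have $\Lambda^{\min}(\lambda,\nu)=\emptyset$ and $\Lambda^{\min}(\mu,\omega)=\emptyset$ (the empty set belongs to $S_\Lambda$). *)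

theory Defs
  imports Main "HOL-Library.Countable_Set"
begin

text \<open>A k-graph is given by a set of morphisms M (objects identified with
identity morphisms), range and source maps r, s, a composition cmp (meaningful
when s x = r y), and a degree functor d into N^k, where N^k is represented as
functions nat => nat vanishing from index k on (ordered pointwise; join = sup).\<close>

definition is_object :: "'a set \<Rightarrow> ('a \<Rightarrow> 'a) \<Rightarrow> ('a \<Rightarrow> 'a) \<Rightarrow> 'a \<Rightarrow> bool" where
  "is_object M r s v \<longleftrightarrow> v \<in> M \<and> r v = v \<and> s v = v"

definition k_graph ::
  "nat \<Rightarrow> 'a set \<Rightarrow> ('a \<Rightarrow> 'a) \<Rightarrow> ('a \<Rightarrow> 'a) \<Rightarrow> ('a \<Rightarrow> 'a \<Rightarrow> 'a) \<Rightarrow> ('a \<Rightarrow> nat \<Rightarrow> nat) \<Rightarrow> bool" where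
  "k_graph k M r s cmp d \<longleftrightarrow>
     countable M \<and>
     (\<forall>x\<in>M. is_object M r s (r x) \<and> is_object M r s (s x)) \<and>
     (\<forall>x\<in>M. \<forall>y\<in>M. s x = r y \<longrightarrow>
        cmp x y \<in> M \<and> r (cmp x y) = r x \<and> s (cmp x y) = s y) \<and>
     (\<forall>x\<in>M. \<forall>y\<in>M. \<forall>z\<in>M. s x = r y \<and> s y = r z \<longrightarrow>
        cmp (cmp x y) z = cmp x (cmp y z)) \<and>
     (\<forall>x\<in>M. cmp (r x) x = x \<and> cmp x (s x) = x) \<and>
     (\<forall>x\<in>M. \<forall>i\<ge>k. d x i = 0) \<and>
     (\<forall>v. is_object M r s v \<longrightarrow> d v = (\<lambda>i. 0)) \<and>
     (\<forall>x\<in>M. \<forall>y\<in>M. s x = r y \<longrightarrow> d (cmp x y) = (\<lambda>i. d x i + d y i)) \<and>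
     (\<forall>x\<in>M. \<forall>m n. (\<forall>i\<ge>k. m i = 0) \<and> (\<forall>i\<ge>k. n i = 0) \<and> d x = (\<lambda>i. m i + n i) \<longrightarrow>
        (\<exists>!p. fst p \<in> M \<and> snd p \<in> M \<and> s (fst p) = r (snd p) \<and>
              d (fst p) = m \<and> d (snd p) = n \<and> x = cmp (fst p) (snd p)))"

definition Lmin ::
  "'a set \<Rightarrow> ('a \<Rightarrow> 'a) \<Rightarrow> ('a \<Rightarrow> 'a) \<Rightarrow> ('a \<Rightarrow> 'a \<Rightarrow> 'a) \<Rightarrow> ('a \<Rightarrow> nat \<Rightarrow> nat)
    \<Rightarrow> 'a \<Rightarrow> 'a \<Rightarrow> ('a \<times> 'a) set" where
  "Lmin M r s cmp d l u = {(a, b). a \<in> M \<and> b \<in> M \<and> s l = r a \<and> s u = r b \<and>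
      cmp l a = cmp u b \<and> d (cmp l a) = sup (d l) (d u)}"

definition finitely_aligned ::
  "'a set \<Rightarrow> ('a \<Rightarrow> 'a) \<Rightarrow> ('a \<Rightarrow> 'a) \<Rightarrow> ('a \<Rightarrow> 'a \<Rightarrow> 'a) \<Rightarrow> ('a \<Rightarrow> nat \<Rightarrow> nat) \<Rightarrow> bool" where
  "finitely_aligned M r s cmp d \<longleftrightarrow> (\<forall>l\<in>M. \<forall>u\<in>M. finite (Lmin M r s cmp d l u))"

definition s_pairs :: "'a set \<Rightarrow> ('a \<Rightarrow> 'a) \<Rightarrow> ('a \<times> 'a) set" where
  "s_pairs M s = {(l, u). l \<in> M \<and> u \<in> M \<and> s l = s u}"

definition S_Lambda ::
  "'a set \<Rightarrow> ('a \<Rightarrow> 'a) \<Rightarrow> ('a \<Rightarrow> 'a) \<Rightarrow> ('a \<Rightarrow> 'a \<Rightarrow> 'a) \<Rightarrow> ('a \<Rightarrow> nat \<Rightarrow> nat) \<Rightarrow> ('a \<times> 'a) set set" where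
  "S_Lambda M r s cmp d = {F. finite F \<and> F \<subseteq> s_pairs M s \<and>
     (\<forall>(l, u)\<in>F. \<forall>(n, w)\<in>F. (l, u) \<noteq> (n, w) \<longrightarrow>
        Lmin M r s cmp d l n = {} \<and> Lmin M r s cmp d u w = {})}"

definition S_mult ::
  "'a set \<Rightarrow> ('a \<Rightarrow> 'a) \<Rightarrow> ('a \<Rightarrow> 'a) \<Rightarrow> ('a \<Rightarrow> 'a \<Rightarrow> 'a) \<Rightarrow> ('a \<Rightarrow> nat \<Rightarrow> nat)
    \<Rightarrow> ('a \<times> 'a) set \<Rightarrow> ('a \<times> 'a) set \<Rightarrow> ('a \<times> 'a) set" where
  "S_mult M r s cmp d F G = (\<Union>(l, u)\<in>F. \<Union>(x, e)\<in>G.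
      {(cmp l a, cmp e b) | a b. (a, b) \<in> Lmin M r s cmp d u x})"

end

theory Submission
  imports Defs
begin

(* Unique factorisation makes every common extension u A = x B factor through a minimal one:
   A = a c and B = b c with (a, b) in Lambda^min(u, x).  So Lambda^min(u, x) is empty exactly when
   u and x have no common extension.  If the first components l a, l' a' of two elements of FG had
   a common extension, then so would l, l' and afterwards x, x' (the pairs of G they were matched
   with); the conditions on F and G force all data to coincide.
   For associativity, both (FG)H and F(GH) turn out to be the set of pairs (l A, f C) with
   (l, u) in F, (x, e) in G, (y, f) in H, u A = x B, e B = y C and d B = (d u - d x) v (d y - d e).
   Reversing all pairs turns FG into G^op F^op and leaves this description invariant, which reduces
   the condition on second components to the one on first components, and F(GH) to (FG)H. *)

locale kgraph =
  fixes k :: nat and M :: "'a set" and r s :: "'a \<Rightarrow> 'a"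
    and cmp :: "'a \<Rightarrow> 'a \<Rightarrow> 'a" and d :: "'a \<Rightarrow> nat \<Rightarrow> nat"
  assumes k_graph: "k_graph k M r s cmp d"
begin

abbreviation \<Lambda>min where "\<Lambda>min \<equiv> Lmin M r s cmp d"
abbreviation S\<Lambda> where "S\<Lambda> \<equiv> S_Lambda M r s cmp d"
abbreviation S_mult_infix (infixl "\<odot>" 70) where "F \<odot> G \<equiv> S_mult M r s cmp d F G"

lemma cmp_closed: "x \<in> M \<Longrightarrow> y \<in> M \<Longrightarrow> s x = r y \<Longrightarrow> cmp x y \<in> M"
  and r_cmp: "x \<in> M \<Longrightarrow> y \<in> M \<Longrightarrow> s x = r y \<Longrightarrow> r (cmp x y) = r x"
  and s_cmp: "x \<in> M \<Longrightarrow> y \<in> M \<Longrightarrow> s x = r y \<Longrightarrow> s (cmp x y) = s y"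
  using k_graph by (simp_all add: k_graph_def)

lemma cmp_assoc:
  "x \<in> M \<Longrightarrow> y \<in> M \<Longrightarrow> z \<in> M \<Longrightarrow> s x = r y \<Longrightarrow> s y = r z \<Longrightarrow>
    cmp (cmp x y) z = cmp x (cmp y z)"
  using k_graph by (simp add: k_graph_def)

lemma d_cmp: "x \<in> M \<Longrightarrow> y \<in> M \<Longrightarrow> s x = r y \<Longrightarrow> d (cmp x y) i = d x i + d y i"
  using k_graph by (simp add: k_graph_def)

lemma d_eq_0_above: "x \<in> M \<Longrightarrow> k \<le> i \<Longrightarrow> d x i = 0"
  using k_graph by (simp add: k_graph_def)

subsection \<open>Unique factorisation\<close>

lemma unique_factorisation:
  "x \<in> M \<Longrightarrow> \<forall>i\<ge>k. m i = 0 \<Longrightarrow> \<forall>i\<ge>k. n i = 0 \<Longrightarrow> d x = (\<lambda>i. m i + n i) \<Longrightarrow>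
    \<exists>!p. fst p \<in> M \<and> snd p \<in> M \<and> s (fst p) = r (snd p) \<and> d (fst p) = m \<and> d (snd p) = n
      \<and> x = cmp (fst p) (snd p)"
  using k_graph unfolding k_graph_def by blast

lemma factor_exists:
  assumes "x \<in> M" "m \<le> d x" "\<forall>i\<ge>k. m i = 0"
  obtains p q where "p \<in> M" "q \<in> M" "s p = r q" "d p = m" "x = cmp p q"
proof -
  have d_sum: "d x = (\<lambda>i. m i + (d x i - m i))"
    using \<open>m \<le> d x\<close> by (simp add: le_fun_def fun_eq_iff)
  have rest: "\<forall>i\<ge>k. d x i - m i = 0"
    using d_eq_0_above \<open>x \<in> M\<close> by simp
  have "\<exists>!p. fst p \<in> M \<and> snd p \<in> M \<and> s (fst p) = r (snd p) \<and> d (fst p) = m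
      \<and> d (snd p) = (\<lambda>i. d x i - m i) \<and> x = cmp (fst p) (snd p)"
    using unique_factorisation[OF assms(1,3) rest d_sum] .
  then obtain p where
    "fst p \<in> M" "snd p \<in> M" "s (fst p) = r (snd p)" "d (fst p) = m" "x = cmp (fst p) (snd p)"
    by (auto dest: ex1_implies_ex)
  then show ?thesis
    by (rule that)
qed

lemma cmp_eq_cmpD:
  assumes "a \<in> M" "g \<in> M" "s a = r g" "a' \<in> M" "g' \<in> M" "s a' = r g'"
    and "cmp a g = cmp a' g'" "d a = d a'"
  shows "a = a'" "g = g'"
proof -
  have "d g i = d g' i" for i
    using d_cmp[of a g i] d_cmp[of a' g' i] assms by simp
  then have dg: "d g = d g'" ..
  have d_sum: "d (cmp a g) = (\<lambda>i. d a i + d g i)"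
    using d_cmp[OF assms(1-3)] by (rule ext)
  have ex1: "\<exists>!p. fst p \<in> M \<and> snd p \<in> M \<and> s (fst p) = r (snd p) \<and> d (fst p) = d a
      \<and> d (snd p) = d g \<and> cmp a g = cmp (fst p) (snd p)" (is "\<exists>!p. ?P p")
    using unique_factorisation[OF cmp_closed[OF assms(1-3)] _ _ d_sum] d_eq_0_above assms(1,2)
    by simp
  have "?P (a, g)" "?P (a', g')"
    using assms dg by simp_all
  then have "(a, g) = (a', g')"
    by (rule Uniq_D[OF ex1[unfolded ex1_iff_ex_Uniq, THEN conjunct2]])
  then show "a = a'" "g = g'" by simp_all
qed

lemma cmp_left_cancel:
  assumes "l \<in> M" "a \<in> M" "a' \<in> M" "s l = r a" "s l = r a'" "cmp l a = cmp l a'"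
  shows "a = a'"
  using cmp_eq_cmpD(2)[OF assms(1,2,4,1,3,5,6) refl] .

lemma d_le_d_cmp: "x \<in> M \<Longrightarrow> y \<in> M \<Longrightarrow> s x = r y \<Longrightarrow> d x \<le> d (cmp x y)"
  by (simp add: le_fun_def d_cmp)

lemma prefix_of_prefix:
  assumes "l \<in> M" "g \<in> M" "s l = r g" "p \<in> M" "q \<in> M" "s p = r q"
    and "cmp l g = cmp p q" "d l \<le> d p"
  obtains a where "a \<in> M" "s l = r a" "p = cmp l a"
proof -
  obtain p1 p2 where p: "p1 \<in> M" "p2 \<in> M" "s p1 = r p2" "d p1 = d l" "p = cmp p1 p2"
    using factor_exists[OF \<open>p \<in> M\<close> \<open>d l \<le> d p\<close>] d_eq_0_above \<open>l \<in> M\<close> by blast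
  have "s p2 = r q"
    using s_cmp[OF p(1-3)] p(5) \<open>s p = r q\<close> by simp
  then have "cmp l g = cmp p1 (cmp p2 q)"
    using cmp_assoc[OF p(1,2) \<open>q \<in> M\<close> p(3)] p(5) assms(7) by simp
  moreover have "cmp p2 q \<in> M" "r (cmp p2 q) = r p2"
    using cmp_closed r_cmp p(2) \<open>q \<in> M\<close> \<open>s p2 = r q\<close> by simp_all
  ultimately have "l = p1"
    using cmp_eq_cmpD(1)[OF assms(1-3) p(1)] p(3,4) by simp
  then show ?thesis
    using that p by blast
qed

subsection \<open>Minimal common extensions\<close>

lemma Lmin_factorE:
  assumes "u \<in> M" "A \<in> M" "s u = r A" "x \<in> M" "B \<in> M" "s x = r B"
    and "cmp u A = cmp x B"
  obtains a b c where "(a, b) \<in> \<Lambda>min u x" "c \<in> M" "s a = r c" "A = cmp a c" "B = cmp b c"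
proof -
  let ?z = "cmp u A"
  have "sup (d u) (d x) \<le> d ?z"
    using d_le_d_cmp[OF assms(1-3)] d_le_d_cmp[OF assms(4-6)] assms(7) by simp
  moreover have "\<forall>i\<ge>k. sup (d u) (d x) i = 0"
    using d_eq_0_above assms(1,4) by simp
  ultimately obtain p q where pq: "p \<in> M" "q \<in> M" "s p = r q" "d p = sup (d u) (d x)" "?z = cmp p q"
    using factor_exists[OF cmp_closed[OF assms(1-3)]] by blast
  obtain a where a: "a \<in> M" "s u = r a" "p = cmp u a"
    using prefix_of_prefix[OF assms(1-3) pq(1-3)] pq(4,5) by auto
  obtain b where b: "b \<in> M" "s x = r b" "p = cmp x b"
    using prefix_of_prefix[OF assms(4-6) pq(1-3)] pq(4,5) assms(7) by auto
  have ab: "(a, b) \<in> \<Lambda>min u x"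
    using a b pq(4) by (simp add: Lmin_def)
  have "s a = r q" "s b = r q"
    using pq(3) a(3) b(3) s_cmp[OF assms(1) a(1,2)] s_cmp[OF assms(4) b(1,2)] by simp_all
  then have "cmp u A = cmp u (cmp a q)" "cmp x B = cmp x (cmp b q)"
    using pq(5) a(3) b(3) assms(7) cmp_assoc[OF assms(1) a(1) pq(2) a(2)] cmp_assoc[OF assms(4) b(1) pq(2) b(2)]
    by simp_all
  then have "A = cmp a q" "B = cmp b q"
    using cmp_left_cancel[OF assms(1,2) cmp_closed[OF a(1) pq(2)] assms(3)]
      cmp_left_cancel[OF assms(4,5) cmp_closed[OF b(1) pq(2)] assms(6)]
      r_cmp[OF a(1) pq(2)] r_cmp[OF b(1) pq(2)] a(2) b(2) \<open>s a = r q\<close> \<open>s b = r q\<close> by simp_all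
  then show ?thesis
    using that[OF ab pq(2) \<open>s a = r q\<close>] by simp
qed

lemma Lmin_memD:
  assumes "u \<in> M" "x \<in> M" "(a, b) \<in> \<Lambda>min u x"
  shows "a \<in> M" "b \<in> M" "s u = r a" "s x = r b" "cmp u a = cmp x b" "s a = s b"
    and "d a i = d x i - d u i" "d b i = d u i - d x i"
proof -
  show ab: "a \<in> M" "b \<in> M" "s u = r a" "s x = r b" "cmp u a = cmp x b"
    using assms(3) by (simp_all add: Lmin_def)
  show "s a = s b"
    using s_cmp[OF assms(1) ab(1,3)] s_cmp[OF assms(2) ab(2,4)] ab(5) by simp
  have "d (cmp u a) = sup (d u) (d x)"
    using assms(3) unfolding Lmin_def by blast
  then have "d (cmp u a) i = max (d u i) (d x i)"
    by (simp add: sup_fun_def sup_nat_def)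
  then have "d u i + d a i = max (d u i) (d x i)" "d x i + d b i = max (d u i) (d x i)"
    using d_cmp[OF assms(1) ab(1,3)] d_cmp[OF assms(2) ab(2,4)] ab(5) by simp_all
  then show "d a i = d x i - d u i" "d b i = d u i - d x i"
    by simp_all
qed

lemma Lmin_memI:
  assumes "u \<in> M" "a \<in> M" "s u = r a" "x \<in> M" "b \<in> M" "s x = r b"
    and "cmp u a = cmp x b" "\<And>i. d a i = d x i - d u i"
  shows "(a, b) \<in> \<Lambda>min u x"
proof -
  have "d (cmp u a) = sup (d u) (d x)"
    using d_cmp[OF assms(1-3)] assms(8) by (simp add: fun_eq_iff sup_fun_def sup_nat_def max_def)
  then show ?thesis
    using assms by (simp add: Lmin_def)
qed

lemma Lmin_swap: "(a, b) \<in> \<Lambda>min u x \<longleftrightarrow> (b, a) \<in> \<Lambda>min x u"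
  by (auto simp: Lmin_def sup_commute)

lemma Lmin_eqI:
  assumes "u \<in> M" "x \<in> M" "(a, b) \<in> \<Lambda>min u x" "(a', b') \<in> \<Lambda>min u x"
    and "c \<in> M" "c' \<in> M" "s a = r c" "s a' = r c'" "cmp a c = cmp a' c'"
  shows "(a, b) = (a', b')"
proof -
  note ab = Lmin_memD[OF assms(1,2,3)] and ab' = Lmin_memD[OF assms(1,2,4)]
  have "d a = d a'"
    using ab(7) ab'(7) by (simp add: fun_eq_iff)
  then have "a = a'"
    using cmp_eq_cmpD(1)[OF ab(1) assms(5,7) ab'(1) assms(6,8,9)] by simp
  then have "cmp x b = cmp x b'"
    using ab(5) ab'(5) by simp
  then have "b = b'"
    using cmp_left_cancel[OF assms(2) ab(2) ab'(2) ab(4) ab'(4)] by simp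
  with \<open>a = a'\<close> show ?thesis by simp
qed

lemma Lmin_cmp_assoc:
  assumes "u \<in> M" "x \<in> M" "(a, b) \<in> \<Lambda>min u x" "c \<in> M" "s a = r c"
  shows "cmp u (cmp a c) = cmp x (cmp b c)"
proof -
  note ab = Lmin_memD[OF assms(1-3)]
  have "cmp u (cmp a c) = cmp (cmp u a) c"
    using cmp_assoc[OF assms(1) ab(1) assms(4) ab(3) assms(5)] by simp
  also have "\<dots> = cmp x (cmp b c)"
    using cmp_assoc[OF assms(2) ab(2) assms(4) ab(4)] ab(5,6) assms(5) by simp
  finally show ?thesis .
qed

subsection \<open>Closure of S_Lambda under the product\<close>

lemma s_pairsD:
  assumes "F \<subseteq> s_pairs M s" "(l, u) \<in> F"
  shows "l \<in> M" "u \<in> M" "s l = s u"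
  using assms by (auto simp: s_pairs_def)

lemma s_pairs_swap: "F \<subseteq> s_pairs M s \<Longrightarrow> prod.swap ` F \<subseteq> s_pairs M s"
  by (auto simp: s_pairs_def)

lemma S_Lambda_iff:
  "F \<in> S\<Lambda> \<longleftrightarrow> finite F \<and> F \<subseteq> s_pairs M s \<and>
    (\<forall>P\<in>F. \<forall>P'\<in>F. P \<noteq> P' \<longrightarrow> \<Lambda>min (fst P) (fst P') = {} \<and> \<Lambda>min (snd P) (snd P') = {})"
  unfolding S_Lambda_def case_prod_beta prod.collapse by simp

lemma S_LambdaI:
  assumes "finite F" "F \<subseteq> s_pairs M s"
    and "\<And>P P'. P \<in> F \<Longrightarrow> P' \<in> F \<Longrightarrow> \<Lambda>min (fst P) (fst P') \<noteq> {} \<Longrightarrow> P = P'"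
    and "\<And>P P'. P \<in> F \<Longrightarrow> P' \<in> F \<Longrightarrow> \<Lambda>min (snd P) (snd P') \<noteq> {} \<Longrightarrow> P = P'"
  shows "F \<in> S\<Lambda>"
  using assms unfolding S_Lambda_iff by blast

lemma S_Lambda_subset: "F \<in> S\<Lambda> \<Longrightarrow> F \<subseteq> s_pairs M s"
  and S_Lambda_finite: "F \<in> S\<Lambda> \<Longrightarrow> finite F"
  by (simp_all add: S_Lambda_iff)

lemma S_Lambda_eqI:
  assumes "F \<in> S\<Lambda>" "P \<in> F" "P' \<in> F"
  shows "\<Lambda>min (fst P) (fst P') \<noteq> {} \<Longrightarrow> P = P'"
    and "\<Lambda>min (snd P) (snd P') \<noteq> {} \<Longrightarrow> P = P'"
  using assms unfolding S_Lambda_iff by blast+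

lemma S_Lambda_swap:
  assumes "F \<in> S\<Lambda>"
  shows "prod.swap ` F \<in> S\<Lambda>"
proof (rule S_LambdaI)
  show "finite (prod.swap ` F)" "prod.swap ` F \<subseteq> s_pairs M s"
    using S_Lambda_finite[OF assms] s_pairs_swap[OF S_Lambda_subset[OF assms]] by simp_all
next
  fix P P' assume "P \<in> prod.swap ` F" "P' \<in> prod.swap ` F"
  then obtain Q Q' where "Q \<in> F" "Q' \<in> F" "P = prod.swap Q" "P' = prod.swap Q'"
    by blast
  then show "\<Lambda>min (fst P) (fst P') \<noteq> {} \<Longrightarrow> P = P'" "\<Lambda>min (snd P) (snd P') \<noteq> {} \<Longrightarrow> P = P'"
    using S_Lambda_eqI[OF assms, of Q Q'] by auto
qed

lemma S_Lambda_fst_cancel: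
  assumes "F \<in> S\<Lambda>" "(l, u) \<in> F" "(l', u') \<in> F"
    and "c \<in> M" "c' \<in> M" "s l = r c" "s l' = r c'" "cmp l c = cmp l' c'"
  shows "l = l'" "u = u'" "c = c'"
proof -
  have "l \<in> M" "l' \<in> M"
    using s_pairsD[OF S_Lambda_subset] assms(1-3) by blast+
  moreover obtain a b where "(a, b) \<in> \<Lambda>min l l'"
    using Lmin_factorE[OF _ assms(4,6) _ assms(5,7,8)] calculation by metis
  ultimately have "(l, u) = (l', u')"
    using S_Lambda_eqI(1)[OF assms(1-3)] by auto
  then show "l = l'" "u = u'"
    by simp_all
  then show "c = c'"
    using cmp_left_cancel[OF \<open>l \<in> M\<close> assms(4,5,6)] assms(7,8) by simp
qed

lemma S_multI:
  "(l, u) \<in> F \<Longrightarrow> (x, e) \<in> G \<Longrightarrow> (a, b) \<in> \<Lambda>min u x \<Longrightarrow> (cmp l a, cmp e b) \<in> F \<odot> G"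
  unfolding S_mult_def by blast

lemma S_multE:
  assumes "P \<in> F \<odot> G"
  obtains l u x e a b where "(l, u) \<in> F" "(x, e) \<in> G" "(a, b) \<in> \<Lambda>min u x"
    "P = (cmp l a, cmp e b)"
  using assms unfolding S_mult_def by blast

lemma S_mult_swap: "prod.swap ` (F \<odot> G) = prod.swap ` G \<odot> prod.swap ` F"
proof (intro equalityI subsetI)
  fix P assume "P \<in> prod.swap ` (F \<odot> G)"
  then obtain l u x e a b where "(l, u) \<in> F" "(x, e) \<in> G" "(a, b) \<in> \<Lambda>min u x"
    "P = (cmp e b, cmp l a)"
    by (auto elim!: S_multE)
  then show "P \<in> prod.swap ` G \<odot> prod.swap ` F"
    using S_multI[of e x _ u l _ b a] by (auto simp: Lmin_swap)
next
  fix P assume "P \<in> prod.swap ` G \<odot> prod.swap ` F"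
  then obtain l u x e a b where "(l, u) \<in> F" "(x, e) \<in> G" "(b, a) \<in> \<Lambda>min x u"
    "P = (cmp e b, cmp l a)"
    by (auto elim!: S_multE)
  then show "P \<in> prod.swap ` (F \<odot> G)"
    using S_multI[of l u F x e G a b] by (auto simp: Lmin_swap)
qed

lemma S_mult_subset_s_pairs:
  assumes "F \<subseteq> s_pairs M s" "G \<subseteq> s_pairs M s"
  shows "F \<odot> G \<subseteq> s_pairs M s"
proof
  fix P assume "P \<in> F \<odot> G"
  then obtain l u x e a b where lu: "(l, u) \<in> F" and xe: "(x, e) \<in> G"
    and ab: "(a, b) \<in> \<Lambda>min u x" and P: "P = (cmp l a, cmp e b)"
    by (rule S_multE)
  note L = s_pairsD[OF assms(1) lu] and X = s_pairsD[OF assms(2) xe]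
  note A = Lmin_memD[OF L(2) X(1) ab]
  have "s l = r a" "s e = r b"
    using L(3) X(3) A(3,4) by simp_all
  then show "P \<in> s_pairs M s"
    using P L X A cmp_closed s_cmp by (simp add: s_pairs_def)
qed

lemma finite_S_mult:
  assumes "finitely_aligned M r s cmp d" "finite F" "finite G"
    and "F \<subseteq> s_pairs M s" "G \<subseteq> s_pairs M s"
  shows "finite (F \<odot> G)"
proof -
  have "finite {(cmp l a, cmp e b) | a b. (a, b) \<in> \<Lambda>min u x}"
    if "(l, u) \<in> F" "(x, e) \<in> G" for l u x e
  proof -
    have "finite (\<Lambda>min u x)"
      using assms(1) s_pairsD[OF assms(4) that(1)] s_pairsD[OF assms(5) that(2)]
      by (simp add: finitely_aligned_def)
    moreover have "{(cmp l a, cmp e b) | a b. (a, b) \<in> \<Lambda>min u x}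
        = (\<lambda>(a, b). (cmp l a, cmp e b)) ` \<Lambda>min u x"
      by auto
    ultimately show ?thesis by simp
  qed
  then show ?thesis
    unfolding S_mult_def using assms(2,3) by (auto intro!: finite_UN_I)
qed

lemma S_mult_fst_eqI:
  assumes F: "F \<in> S\<Lambda>" and G: "G \<in> S\<Lambda>" and "P \<in> F \<odot> G" "P' \<in> F \<odot> G"
    and "\<Lambda>min (fst P) (fst P') \<noteq> {}"
  shows "P = P'"
proof -
  obtain l u x e a b where lu: "(l, u) \<in> F" and xe: "(x, e) \<in> G"
    and ab: "(a, b) \<in> \<Lambda>min u x" and P: "P = (cmp l a, cmp e b)"
    using assms(3) by (rule S_multE)
  obtain l' u' x' e' a' b' where lu': "(l', u') \<in> F" and xe': "(x', e') \<in> G"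
    and ab': "(a', b') \<in> \<Lambda>min u' x'" and P': "P' = (cmp l' a', cmp e' b')"
    using assms(4) by (rule S_multE)
  note L = s_pairsD[OF S_Lambda_subset[OF F] lu] and X = s_pairsD[OF S_Lambda_subset[OF G] xe]
  note L' = s_pairsD[OF S_Lambda_subset[OF F] lu'] and X' = s_pairsD[OF S_Lambda_subset[OF G] xe']
  note A = Lmin_memD[OF L(2) X(1) ab] and A' = Lmin_memD[OF L'(2) X'(1) ab']
  have la: "s l = r a" "s l' = r a'"
    using L(3) L'(3) A(3) A'(3) by simp_all
  obtain c c' where cc: "(c, c') \<in> \<Lambda>min (cmp l a) (cmp l' a')"
    using assms(5) P P' by auto
  note C = Lmin_memD[OF cmp_closed[OF L(1) A(1) la(1)] cmp_closed[OF L'(1) A'(1) la(2)] cc]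
  have ac: "s a = r c" "s a' = r c'"
    using C(3,4) s_cmp[OF L(1) A(1) la(1)] s_cmp[OF L'(1) A'(1) la(2)] by simp_all
  have bc: "s b = r c" "s b' = r c'"
    using A(6) A'(6) ac by simp_all
  have "cmp l (cmp a c) = cmp l' (cmp a' c')"
    using C(5) cmp_assoc[OF L(1) A(1) C(1) la(1) ac(1)] cmp_assoc[OF L'(1) A'(1) C(2) la(2) ac(2)]
    by simp
  then have lu_eq: "l = l'" "u = u'" and ac_eq: "cmp a c = cmp a' c'"
    using S_Lambda_fst_cancel[OF F lu lu' cmp_closed[OF A(1) C(1) ac(1)] cmp_closed[OF A'(1) C(2) ac(2)]]
      r_cmp[OF A(1) C(1) ac(1)] r_cmp[OF A'(1) C(2) ac(2)] la by simp_all
  then have "cmp x (cmp b c) = cmp x' (cmp b' c')"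
    using Lmin_cmp_assoc[OF L(2) X(1) ab C(1) ac(1)] Lmin_cmp_assoc[OF L'(2) X'(1) ab' C(2) ac(2)]
    by simp
  then have xe_eq: "x = x'" "e = e'"
    using S_Lambda_fst_cancel[OF G xe xe' cmp_closed[OF A(2) C(1) bc(1)] cmp_closed[OF A'(2) C(2) bc(2)]]
      r_cmp[OF A(2) C(1) bc(1)] r_cmp[OF A'(2) C(2) bc(2)] A(4) A'(4) by simp_all
  then have "(a, b) = (a', b')"
    using Lmin_eqI[OF L(2) X(1) ab _ C(1,2) ac ac_eq] ab' lu_eq by simp
  then show ?thesis
    using P P' lu_eq xe_eq by simp
qed

lemma S_mult_closed:
  assumes "finitely_aligned M r s cmp d" "F \<in> S\<Lambda>" "G \<in> S\<Lambda>"
  shows "F \<odot> G \<in> S\<Lambda>"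
proof (rule S_LambdaI)
  show "finite (F \<odot> G)"
    using finite_S_mult[OF assms(1) S_Lambda_finite[OF assms(2)] S_Lambda_finite[OF assms(3)]
        S_Lambda_subset[OF assms(2)] S_Lambda_subset[OF assms(3)]] .
  show "F \<odot> G \<subseteq> s_pairs M s"
    using S_mult_subset_s_pairs[OF S_Lambda_subset[OF assms(2)] S_Lambda_subset[OF assms(3)]] .
  show "P = P'" if "P \<in> F \<odot> G" "P' \<in> F \<odot> G" "\<Lambda>min (fst P) (fst P') \<noteq> {}" for P P'
    using S_mult_fst_eqI[OF assms(2,3) that] .
  show "P = P'" if "P \<in> F \<odot> G" "P' \<in> F \<odot> G" "\<Lambda>min (snd P) (snd P') \<noteq> {}" for P P'
  proof -
    have "prod.swap P \<in> prod.swap ` G \<odot> prod.swap ` F" "prod.swap P' \<in> prod.swap ` G \<odot> prod.swap ` F"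
      using imageI[OF that(1), of prod.swap] imageI[OF that(2), of prod.swap]
      unfolding S_mult_swap .
    then have "prod.swap P = prod.swap P'"
      using S_mult_fst_eqI[OF S_Lambda_swap[OF assms(3)] S_Lambda_swap[OF assms(2)]] that(3) by simp
    then show ?thesis by (metis swap_swap)
  qed
qed

subsection \<open>Associativity\<close>

(* If (a, b) in Lambda^min(u, x) and (c, C) in Lambda^min(e b, y), then (a c, C) is such a pair
   with B = b c, whose degree (d u - d x) + (d y - d (e b)) (truncated subtraction, pointwise)
   equals (d u - d x) v (d y - d e).  This last form is symmetric under reversing the zigzag. *)
definition Lmin_chain :: "'a \<Rightarrow> 'a \<Rightarrow> 'a \<Rightarrow> 'a \<Rightarrow> ('a \<times> 'a) set" where
  "Lmin_chain u x e y = {(A, C). \<exists>B. A \<in> M \<and> B \<in> M \<and> C \<in> M \<and>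
     s u = r A \<and> s x = r B \<and> s e = r B \<and> s y = r C \<and>
     cmp u A = cmp x B \<and> cmp e B = cmp y C \<and> d B = sup (d u - d x) (d y - d e)}"

lemma Lmin_chain_swap: "(A, C) \<in> Lmin_chain u x e y \<longleftrightarrow> (C, A) \<in> Lmin_chain y e x u"
  unfolding Lmin_chain_def by (auto simp: sup_commute)

lemma Lmin_chainI:
  assumes "u \<in> M" "x \<in> M" "e \<in> M" "y \<in> M" "s x = s e"
    and ab: "(a, b) \<in> \<Lambda>min u x" and cg: "(c, g) \<in> \<Lambda>min (cmp e b) y"
  shows "(cmp a c, g) \<in> Lmin_chain u x e y"
proof -
  note A = Lmin_memD[OF assms(1,2) ab]
  have eb: "s e = r b"
    using assms(5) A(4) by simp
  note C = Lmin_memD[OF cmp_closed[OF assms(3) A(2) eb] assms(4) cg]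
  have bc: "s b = r c" and ac: "s a = r c"
    using C(3) s_cmp[OF assms(3) A(2) eb] A(6) by simp_all
  have "d (cmp b c) = sup (d u - d x) (d y - d e)"
    using d_cmp[OF A(2) C(1) bc] A(8) C(7) d_cmp[OF assms(3) A(2) eb]
    by (auto simp: fun_eq_iff sup_fun_def sup_nat_def)
  moreover have "cmp u (cmp a c) = cmp x (cmp b c)"
    using Lmin_cmp_assoc[OF assms(1,2) ab C(1) ac] .
  moreover have "cmp e (cmp b c) = cmp y g"
    using cmp_assoc[OF assms(3) A(2) C(1) eb bc] C(5) by simp
  ultimately show ?thesis
    unfolding Lmin_chain_def
    using cmp_closed[OF A(1) C(1) ac] cmp_closed[OF A(2) C(1) bc] r_cmp[OF A(1) C(1) ac]
      r_cmp[OF A(2) C(1) bc] A(3,4) C(2,4) eb by auto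
qed

lemma Lmin_chainE:
  assumes "u \<in> M" "x \<in> M" "e \<in> M" "y \<in> M"
    and "(A, C) \<in> Lmin_chain u x e y"
  obtains a b c where "(a, b) \<in> \<Lambda>min u x" "(c, C) \<in> \<Lambda>min (cmp e b) y" "A = cmp a c"
proof -
  obtain B where H: "A \<in> M" "B \<in> M" "C \<in> M" "s u = r A" "s x = r B" "s e = r B" "s y = r C"
    "cmp u A = cmp x B" "cmp e B = cmp y C" "d B = sup (d u - d x) (d y - d e)"
    using assms(5) unfolding Lmin_chain_def by blast
  obtain a b c where ab: "(a, b) \<in> \<Lambda>min u x" and c: "c \<in> M" "s a = r c" "A = cmp a c" "B = cmp b c"
    using Lmin_factorE[OF assms(1) H(1,4) assms(2) H(2,5,8)] .
  note AB = Lmin_memD[OF assms(1,2) ab]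
  have bc: "s b = r c" and eb: "s e = r b"
    using c(2) AB(6) H(6) c(4) r_cmp[OF AB(2) c(1)] by simp_all
  have "(c, C) \<in> \<Lambda>min (cmp e b) y"
  proof (rule Lmin_memI[OF cmp_closed[OF assms(3) AB(2) eb] c(1) _ assms(4) H(3,7)])
    show "s (cmp e b) = r c"
      using s_cmp[OF assms(3) AB(2) eb] bc by simp
    show "cmp (cmp e b) c = cmp y C"
      using cmp_assoc[OF assms(3) AB(2) c(1) eb bc] c(4) H(9) by simp
    show "d c i = d y i - d (cmp e b) i" for i
      using H(10) d_cmp[OF AB(2) c(1) bc, of i] c(4) AB(8)[of i] d_cmp[OF assms(3) AB(2) eb, of i]
      by (simp add: sup_fun_def sup_nat_def)
  qed
  then show ?thesis
    using that ab c(3) by blast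
qed

definition S_mult3 :: "('a \<times> 'a) set \<Rightarrow> ('a \<times> 'a) set \<Rightarrow> ('a \<times> 'a) set \<Rightarrow> ('a \<times> 'a) set" where
  "S_mult3 F G H = (\<Union>(l, u)\<in>F. \<Union>(x, e)\<in>G. \<Union>(y, f)\<in>H.
      {(cmp l A, cmp f C) | A C. (A, C) \<in> Lmin_chain u x e y})"

lemma S_mult3I:
  "(l, u) \<in> F \<Longrightarrow> (x, e) \<in> G \<Longrightarrow> (y, f) \<in> H \<Longrightarrow> (A, C) \<in> Lmin_chain u x e y \<Longrightarrow>
    (cmp l A, cmp f C) \<in> S_mult3 F G H"
  unfolding S_mult3_def by blast

lemma S_mult3E:
  assumes "P \<in> S_mult3 F G H"
  obtains l u x e y f A C where "(l, u) \<in> F" "(x, e) \<in> G" "(y, f) \<in> H"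
    "(A, C) \<in> Lmin_chain u x e y" "P = (cmp l A, cmp f C)"
  using assms unfolding S_mult3_def by blast

lemma S_mult3_swap: "prod.swap ` S_mult3 F G H = S_mult3 (prod.swap ` H) (prod.swap ` G) (prod.swap ` F)"
proof (intro equalityI subsetI)
  fix P assume "P \<in> prod.swap ` S_mult3 F G H"
  then obtain l u x e y f A C where "(l, u) \<in> F" "(x, e) \<in> G" "(y, f) \<in> H"
    "(A, C) \<in> Lmin_chain u x e y" "P = (cmp f C, cmp l A)"
    by (auto elim!: S_mult3E)
  then show "P \<in> S_mult3 (prod.swap ` H) (prod.swap ` G) (prod.swap ` F)"
    using S_mult3I[of f y _ e x _ u l _ C A] by (auto simp: Lmin_chain_swap)
next
  fix P assume "P \<in> S_mult3 (prod.swap ` H) (prod.swap ` G) (prod.swap ` F)"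
  then obtain l u x e y f A C where "(l, u) \<in> F" "(x, e) \<in> G" "(y, f) \<in> H"
    "(C, A) \<in> Lmin_chain y e x u" "P = (cmp f C, cmp l A)"
    by (auto elim!: S_mult3E)
  then show "P \<in> prod.swap ` S_mult3 F G H"
    using S_mult3I[of l u F x e G y f H A C] by (auto simp: Lmin_chain_swap)
qed

lemma S_mult_S_mult_subset_S_mult3:
  assumes F: "F \<subseteq> s_pairs M s" and G: "G \<subseteq> s_pairs M s" and H: "H \<subseteq> s_pairs M s"
  shows "F \<odot> G \<odot> H \<subseteq> S_mult3 F G H"
proof
  fix P assume "P \<in> F \<odot> G \<odot> H"
  then obtain L E y f c g where LE: "(L, E) \<in> F \<odot> G" and yf: "(y, f) \<in> H"
    and cg: "(c, g) \<in> \<Lambda>min E y" and P: "P = (cmp L c, cmp f g)"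
    by (rule S_multE)
  obtain l u x e a b where lu: "(l, u) \<in> F" and xe: "(x, e) \<in> G"
    and ab: "(a, b) \<in> \<Lambda>min u x" and "(L, E) = (cmp l a, cmp e b)"
    using LE by (rule S_multE)
  then have LE_eq: "L = cmp l a" "E = cmp e b"
    by simp_all
  note L = s_pairsD[OF F lu] and X = s_pairsD[OF G xe] and Y = s_pairsD[OF H yf]
  note A = Lmin_memD[OF L(2) X(1) ab]
  have la: "s l = r a" and eb: "s e = r b"
    using L(3) X(3) A(3,4) by simp_all
  note C = Lmin_memD[OF cmp_closed[OF X(2) A(2) eb] Y(1) cg[unfolded LE_eq]]
  have ac: "s a = r c"
    using C(3) s_cmp[OF X(2) A(2) eb] A(6) by simp
  have "(cmp a c, g) \<in> Lmin_chain u x e y"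
    using Lmin_chainI[OF L(2) X(1,2) Y(1) X(3) ab cg[unfolded LE_eq]] .
  moreover have "cmp L c = cmp l (cmp a c)"
    using LE_eq(1) cmp_assoc[OF L(1) A(1) C(1) la ac] by simp
  ultimately show "P \<in> S_mult3 F G H"
    using S_mult3I[OF lu xe yf] P by simp
qed

lemma S_mult3_subset_S_mult_S_mult:
  assumes F: "F \<subseteq> s_pairs M s" and G: "G \<subseteq> s_pairs M s" and H: "H \<subseteq> s_pairs M s"
  shows "S_mult3 F G H \<subseteq> F \<odot> G \<odot> H"
proof
  fix P assume "P \<in> S_mult3 F G H"
  then obtain l u x e y f A C where lu: "(l, u) \<in> F" and xe: "(x, e) \<in> G" and yf: "(y, f) \<in> H"
    and AC: "(A, C) \<in> Lmin_chain u x e y" and P: "P = (cmp l A, cmp f C)"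
    by (rule S_mult3E)
  note L = s_pairsD[OF F lu] and X = s_pairsD[OF G xe] and Y = s_pairsD[OF H yf]
  obtain a b c where ab: "(a, b) \<in> \<Lambda>min u x" and cC: "(c, C) \<in> \<Lambda>min (cmp e b) y"
    and A_eq: "A = cmp a c"
    using Lmin_chainE[OF L(2) X(1,2) Y(1) AC] .
  note AB = Lmin_memD[OF L(2) X(1) ab]
  have la: "s l = r a" and eb: "s e = r b"
    using L(3) X(3) AB(3,4) by simp_all
  note C' = Lmin_memD[OF cmp_closed[OF X(2) AB(2) eb] Y(1) cC]
  have ac: "s a = r c"
    using C'(3) s_cmp[OF X(2) AB(2) eb] AB(6) by simp
  have "(cmp (cmp l a) c, cmp f C) \<in> F \<odot> G \<odot> H"
    using S_multI[OF S_multI[OF lu xe ab] yf cC] .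
  then show "P \<in> F \<odot> G \<odot> H"
    using P A_eq cmp_assoc[OF L(1) AB(1) C'(1) la ac] by simp
qed

lemma S_mult_S_mult_eq_S_mult3:
  assumes "F \<subseteq> s_pairs M s" "G \<subseteq> s_pairs M s" "H \<subseteq> s_pairs M s"
  shows "F \<odot> G \<odot> H = S_mult3 F G H"
  using S_mult_S_mult_subset_S_mult3[OF assms] S_mult3_subset_S_mult_S_mult[OF assms] by (rule equalityI)

lemma S_mult_assoc:
  assumes "F \<subseteq> s_pairs M s" "G \<subseteq> s_pairs M s" "H \<subseteq> s_pairs M s"
  shows "F \<odot> G \<odot> H = F \<odot> (G \<odot> H)"
proof -
  have "prod.swap ` (F \<odot> (G \<odot> H)) = prod.swap ` H \<odot> prod.swap ` G \<odot> prod.swap ` F"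
    by (simp add: S_mult_swap)
  also have "\<dots> = S_mult3 (prod.swap ` H) (prod.swap ` G) (prod.swap ` F)"
    by (rule S_mult_S_mult_eq_S_mult3) (use s_pairs_swap assms in auto)
  also have "\<dots> = prod.swap ` (F \<odot> G \<odot> H)"
    using S_mult3_swap S_mult_S_mult_eq_S_mult3[OF assms] by simp
  finally have "prod.swap ` prod.swap ` (F \<odot> G \<odot> H) = prod.swap ` prod.swap ` (F \<odot> (G \<odot> H))"
    by simp
  then show ?thesis
    by (simp add: image_image)
qed

end

theorem proposition4p3:
  fixes k :: nat and M :: "'a set" and r s :: "'a \<Rightarrow> 'a"
    and cmp :: "'a \<Rightarrow> 'a \<Rightarrow> 'a" and d :: "'a \<Rightarrow> nat \<Rightarrow> nat"
  assumes "k_graph k M r s cmp d"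
    and "finitely_aligned M r s cmp d"
  shows "(\<forall>F\<in>S_Lambda M r s cmp d. \<forall>G\<in>S_Lambda M r s cmp d.
            S_mult M r s cmp d F G \<in> S_Lambda M r s cmp d)
       \<and> (\<forall>F\<in>S_Lambda M r s cmp d. \<forall>G\<in>S_Lambda M r s cmp d. \<forall>H\<in>S_Lambda M r s cmp d.
            S_mult M r s cmp d (S_mult M r s cmp d F G) H
          = S_mult M r s cmp d F (S_mult M r s cmp d G H))"
proof -
  interpret kgraph k M r s cmp d
    using assms(1) by (rule kgraph.intro)
  show ?thesis
    by (intro conjI ballI S_mult_closed[OF assms(2)] S_mult_assoc S_Lambda_subset)
qed

end
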